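(* Let $T$ be a monoid, $Y$ a semilattice and $\cdot$ a left partially defined action of $T$ on $Y$ satisfying axioms (A), (B), (C), such that $M(T,Y)$ is an ultra $F$-restriction monoid. Let $\circ$ be the reverse right partial action, and for $t\in T$ let $d_t$ and $r_t$ be the greatest elements of $\mathrm{dom}(\varphi_t)$ and $\mathrm{ran}(\varphi_t)$, respectively. For $t\in T$, $y\in Y$ put $t*y=t\cdot(y\wedge d_t)$ and $y\bullet t=(y\wedge r_t)\circ t$. Then: (1) $*$ and $\bullet$ form a double action of $T$ on $Y$ (so $Y*_mT$ can be formed); (2) $Y*_mT$ and $M(T,Y)$ are equal as $(2,1,1,0)$-algebras.
   Context: A left partial action of $T$ on $Y$: partial map $(t,y)\mapsto t\cdot y$, $1\cdot y=y$ always defined, and if $t\cdot y$, $s\cdot(t\cdot y)$ are defined then $(st)\cdot y$ is defined and equals it. With $\varphi_t\colon y\mapsto t\cdot y$: (A) $\mathrm{dom}\varphi_t$, $\mathrm{ran}\varphi_t$ are order ideals of $Y$; (B) $\varphi_t$ is an order-isomorphism $\mathrm{dom}\varphi_t\to\mathrm{ran}\varphi_t$; (C) $\mathrm{dom}\varphi_t\ne\varnothing$. Partially defined action: $(st)\cdot x$ defined iff $t\cdot x$ and $s\cdot(t\cdot x)$ defined. Reverse right partial action: $y\circ t$ defined iff $y\in\mathrm{ran}\varphi_t$, with $y\circ t=\varphi_t^{-1}(y)$. $M(T,Y)=\{(y,t)\colon y\circ t\text{ defined}\}$ with $(x,s)(y,t)=(s\cdot((x\circ s)\wedge y),st)$,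 $(y,t)^*=(y\circ t,1)$, $(y,t)^+=(y,1)$. Restriction semigroups: algebras $(S,\cdot,{}^*,{}^+)$ with $(S,\cdot)$ a semigroup satisfying $xx^*=x$, $x^*y^*=y^*x^*$, $(xy^* )^*=x^*y^*$, $x^*y=y(xy)^*$, $x^+x=x$, $x^+y^+=y^+x^+$, $(x^+y)^+=x^+y^+$, $xy^+=(xy)^+x$, $(x^+)^*=x^+$, $(x^* )^+=x^*$. $P(S)=\{x^*\}$; $\sigma$ the least congruence identifying projections; proper: ($a^*=b^*$, $a\sigma b$) or ($a^+=b^+$, $a\sigma b$) imply $a=b$; $F$-restriction: every $\sigma$-class has a maximum for the order $a\le b\iff a=eb$, $e\in P(S)$. Underlying left partial action of proper $S$: of $S/\sigma$ on $P(S)$, $t\cdot e$ defined iff some $a\in t$ has $a^*\ge e$, value $(ae)^+$. Ultra $F$-restriction monoid: proper $F$-restriction monoid whose underlying left partial action is a partially defined action. Double action of $T$ on a semilattice $Y$ with identity $\epsilon$: a left action $*$ and right action $\bullet$ with $t*(x\wedge y)=t*x\wedge t*y$, $(x\wedge y)\bullet t=x\bullet t\wedge y\bullet t$, $(t*x)\bullet t=\epsilon\bullet t\wedge x$, $t*(x\bullet t)=x\wedge t*\epsilon$. Then $Y*_mT=\{(y,t)\colon y\le t*\epsilon\}$ with $(x,s)(y,t)=(x\wedge s*y,st)$, $(y,t)^*=(y\bullet t,1)$, $(y,t)^+=(y,1)$, identity $(\epsilon,1)$. *)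

theory Defs
  imports Main
begin

definition restriction_semigroup ::
  "'a set \<Rightarrow> ('a \<Rightarrow> 'a \<Rightarrow> 'a) \<Rightarrow> ('a \<Rightarrow> 'a) \<Rightarrow> ('a \<Rightarrow> 'a) \<Rightarrow> bool" where
  "restriction_semigroup S m st pl \<longleftrightarrow>
     (\<forall>x\<in>S. \<forall>y\<in>S. m x y \<in> S) \<and> (\<forall>x\<in>S. st x \<in> S \<and> pl x \<in> S) \<and>
     (\<forall>x\<in>S. \<forall>y\<in>S. \<forall>z\<in>S. m (m x y) z = m x (m y z)) \<and>
     (\<forall>x\<in>S. m x (st x) = x) \<and>
     (\<forall>x\<in>S. \<forall>y\<in>S. m (st x) (st y) = m (st y) (st x)) \<and>
     (\<forall>x\<in>S. \<forall>y\<in>S. st (m x (st y)) = m (st x) (st y)) \<and>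
     (\<forall>x\<in>S. \<forall>y\<in>S. m (st x) y = m y (st (m x y))) \<and>
     (\<forall>x\<in>S. m (pl x) x = x) \<and>
     (\<forall>x\<in>S. \<forall>y\<in>S. m (pl x) (pl y) = m (pl y) (pl x)) \<and>
     (\<forall>x\<in>S. \<forall>y\<in>S. pl (m (pl x) y) = m (pl x) (pl y)) \<and>
     (\<forall>x\<in>S. \<forall>y\<in>S. m x (pl y) = m (pl (m x y)) x) \<and>
     (\<forall>x\<in>S. st (pl x) = pl x) \<and>
     (\<forall>x\<in>S. pl (st x) = st x)"

definition restriction_monoid ::
  "'a set \<Rightarrow> ('a \<Rightarrow> 'a \<Rightarrow> 'a) \<Rightarrow> ('a \<Rightarrow> 'a) \<Rightarrow> ('a \<Rightarrow> 'a) \<Rightarrow> bool" where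
  "restriction_monoid S m st pl \<longleftrightarrow> restriction_semigroup S m st pl \<and>
     (\<exists>u\<in>S. \<forall>x\<in>S. m u x = x \<and> m x u = x)"

definition projections :: "'a set \<Rightarrow> ('a \<Rightarrow> 'a) \<Rightarrow> 'a set" where
  "projections S st = st ` S"

definition nat_le ::
  "'a set \<Rightarrow> ('a \<Rightarrow> 'a \<Rightarrow> 'a) \<Rightarrow> ('a \<Rightarrow> 'a) \<Rightarrow> 'a \<Rightarrow> 'a \<Rightarrow> bool" where
  "nat_le S m st a b \<longleftrightarrow> (\<exists>e\<in>projections S st. a = m e b)"

definition sigma_rel ::
  "'a set \<Rightarrow> ('a \<Rightarrow> 'a \<Rightarrow> 'a) \<Rightarrow> ('a \<Rightarrow> 'a) \<Rightarrow> ('a \<Rightarrow> 'a) \<Rightarrow> ('a \<times> 'a) set" where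
  "sigma_rel S m st pl = \<Inter> {R. equiv S R \<and>
      (\<forall>a b c. (a, b) \<in> R \<and> c \<in> S \<longrightarrow> (m c a, m c b) \<in> R \<and> (m a c, m b c) \<in> R) \<and>
      (\<forall>a b. (a, b) \<in> R \<longrightarrow> (st a, st b) \<in> R \<and> (pl a, pl b) \<in> R) \<and>
      projections S st \<times> projections S st \<subseteq> R}"

definition proper_rs ::
  "'a set \<Rightarrow> ('a \<Rightarrow> 'a \<Rightarrow> 'a) \<Rightarrow> ('a \<Rightarrow> 'a) \<Rightarrow> ('a \<Rightarrow> 'a) \<Rightarrow> bool" where
  "proper_rs S m st pl \<longleftrightarrow>
     (\<forall>a\<in>S. \<forall>b\<in>S. st a = st b \<and> (a, b) \<in> sigma_rel S m st pl \<longrightarrow> a = b) \<and>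
     (\<forall>a\<in>S. \<forall>b\<in>S. pl a = pl b \<and> (a, b) \<in> sigma_rel S m st pl \<longrightarrow> a = b)"

definition F_restriction ::
  "'a set \<Rightarrow> ('a \<Rightarrow> 'a \<Rightarrow> 'a) \<Rightarrow> ('a \<Rightarrow> 'a) \<Rightarrow> ('a \<Rightarrow> 'a) \<Rightarrow> bool" where
  "F_restriction S m st pl \<longleftrightarrow>
     (\<forall>a\<in>S. \<exists>b. (b, a) \<in> sigma_rel S m st pl \<and>
        (\<forall>c. (c, a) \<in> sigma_rel S m st pl \<longrightarrow> nat_le S m st c b))"

text \<open>Underlying left partial action of S/sigma on P(S): the class of a acts on e
  iff some c in the class of a has e \<le> c*, with value (c e)+.
  (Classes are given by representatives a.)\<close>
definition upa ::
  "'a set \<Rightarrow> ('a \<Rightarrow> 'a \<Rightarrow> 'a) \<Rightarrow> ('a \<Rightarrow> 'a) \<Rightarrow> ('a \<Rightarrow> 'a) \<Rightarrow> 'a \<Rightarrow> 'a \<Rightarrow> 'a option" where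
  "upa S m st pl a e =
     (if \<exists>c. (c, a) \<in> sigma_rel S m st pl \<and> nat_le S m st e (st c)
      then Some (pl (m (SOME c. (c, a) \<in> sigma_rel S m st pl \<and> nat_le S m st e (st c)) e))
      else None)"

definition ultra_F_restriction_monoid ::
  "'a set \<Rightarrow> ('a \<Rightarrow> 'a \<Rightarrow> 'a) \<Rightarrow> ('a \<Rightarrow> 'a) \<Rightarrow> ('a \<Rightarrow> 'a) \<Rightarrow> bool" where
  "ultra_F_restriction_monoid S m st pl \<longleftrightarrow>
     restriction_monoid S m st pl \<and> proper_rs S m st pl \<and> F_restriction S m st pl \<and>
     (\<forall>a\<in>S. \<forall>b\<in>S. \<forall>e\<in>projections S st.
        upa S m st pl (m a b) e \<noteq> None \<longleftrightarrow>
        (\<exists>f. upa S m st pl b e = Some f \<and> upa S m st pl a f \<noteq> None))"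

definition pdom :: "('t \<Rightarrow> 'y \<Rightarrow> 'y option) \<Rightarrow> 't \<Rightarrow> 'y set" where
  "pdom act t = {y. act t y \<noteq> None}"

definition pran :: "('t \<Rightarrow> 'y \<Rightarrow> 'y option) \<Rightarrow> 't \<Rightarrow> 'y set" where
  "pran act t = {z. \<exists>y. act t y = Some z}"

definition order_ideal :: "'y::order set \<Rightarrow> bool" where
  "order_ideal I \<longleftrightarrow> (\<forall>x\<in>I. \<forall>y. y \<le> x \<longrightarrow> y \<in> I)"

definition left_partial_action :: "('t::monoid_mult \<Rightarrow> 'y \<Rightarrow> 'y option) \<Rightarrow> bool" where
  "left_partial_action act \<longleftrightarrow>
     (\<forall>y. act 1 y = Some y) \<and>
     (\<forall>s t y z w. act t y = Some z \<and> act s z = Some w \<longrightarrow> act (s * t) y = Some w)"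

definition axioms_ABC :: "('t \<Rightarrow> 'y::order \<Rightarrow> 'y option) \<Rightarrow> bool" where
  "axioms_ABC act \<longleftrightarrow> (\<forall>t.
     order_ideal (pdom act t) \<and> order_ideal (pran act t) \<and>
     bij_betw (\<lambda>y. the (act t y)) (pdom act t) (pran act t) \<and>
     (\<forall>x\<in>pdom act t. \<forall>y\<in>pdom act t. x \<le> y \<longleftrightarrow> the (act t x) \<le> the (act t y)) \<and>
     pdom act t \<noteq> {})"

definition partially_defined_action :: "('t::monoid_mult \<Rightarrow> 'y \<Rightarrow> 'y option) \<Rightarrow> bool" where
  "partially_defined_action act \<longleftrightarrow>
     (\<forall>s t x. act (s * t) x \<noteq> None \<longleftrightarrow> (\<exists>y. act t x = Some y \<and> act s y \<noteq> None))"

text \<open>Reverse right partial action: y \<circ> t = phi_t^{-1}(y), defined iff y in ran phi_t.\<close>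
definition rcirc :: "('t \<Rightarrow> 'y \<Rightarrow> 'y option) \<Rightarrow> 'y \<Rightarrow> 't \<Rightarrow> 'y" where
  "rcirc act y t = (THE x. act t x = Some y)"

definition M_carrier :: "('t \<Rightarrow> 'y \<Rightarrow> 'y option) \<Rightarrow> ('y \<times> 't) set" where
  "M_carrier act = {(y, t). y \<in> pran act t}"

definition M_mult :: "('t::monoid_mult \<Rightarrow> 'y::semilattice_inf \<Rightarrow> 'y option)
    \<Rightarrow> 'y \<times> 't \<Rightarrow> 'y \<times> 't \<Rightarrow> 'y \<times> 't" where
  "M_mult act p q = (case p of (x, s) \<Rightarrow> case q of (y, t) \<Rightarrow>
     (the (act s (inf (rcirc act x s) y)), s * t))"

definition M_star :: "('t::monoid_mult \<Rightarrow> 'y \<Rightarrow> 'y option) \<Rightarrow> 'y \<times> 't \<Rightarrow> 'y \<times> 't" where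
  "M_star act p = (case p of (y, t) \<Rightarrow> (rcirc act y t, 1))"

definition M_plus :: "'y \<times> 't::monoid_mult \<Rightarrow> 'y \<times> 't" where
  "M_plus p = (case p of (y, t) \<Rightarrow> (y, 1))"

definition sl_id :: "'y::order" where
  "sl_id = (GREATEST y. True)"

definition double_action ::
  "('t::monoid_mult \<Rightarrow> 'y::semilattice_inf \<Rightarrow> 'y) \<Rightarrow> ('y \<Rightarrow> 't \<Rightarrow> 'y) \<Rightarrow> bool" where
  "double_action la ra \<longleftrightarrow>
     (\<forall>x. la 1 x = x) \<and> (\<forall>s t x. la s (la t x) = la (s * t) x) \<and>
     (\<forall>x. ra x 1 = x) \<and> (\<forall>s t x. ra (ra x s) t = ra x (s * t)) \<and>
     (\<forall>t x y. la t (inf x y) = inf (la t x) (la t y)) \<and>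
     (\<forall>t x y. ra (inf x y) t = inf (ra x t) (ra y t)) \<and>
     (\<forall>t x. ra (la t x) t = inf (ra sl_id t) x) \<and>
     (\<forall>t x. la t (ra x t) = inf x (la t sl_id))"

definition Ym_carrier :: "('t \<Rightarrow> 'y::order \<Rightarrow> 'y) \<Rightarrow> ('y \<times> 't) set" where
  "Ym_carrier la = {(y, t). y \<le> la t sl_id}"

definition Ym_mult :: "('t::monoid_mult \<Rightarrow> 'y::semilattice_inf \<Rightarrow> 'y)
    \<Rightarrow> 'y \<times> 't \<Rightarrow> 'y \<times> 't \<Rightarrow> 'y \<times> 't" where
  "Ym_mult la p q = (case p of (x, s) \<Rightarrow> case q of (y, t) \<Rightarrow> (inf x (la s y), s * t))"

definition Ym_star :: "('y \<Rightarrow> 't::monoid_mult \<Rightarrow> 'y) \<Rightarrow> 'y \<times> 't \<Rightarrow> 'y \<times> 't" where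
  "Ym_star ra p = (case p of (y, t) \<Rightarrow> (ra y t, 1))"

definition Ym_plus :: "'y \<times> 't::monoid_mult \<Rightarrow> 'y \<times> 't" where
  "Ym_plus p = (case p of (y, t) \<Rightarrow> (y, 1))"

definition Ym_one :: "'y::order \<times> 't::monoid_mult" where
  "Ym_one = (sl_id, 1)"

end

theory Submission
  imports Defs
begin

text \<open>
  Its identity must be \<open>(\<epsilon>, 1)\<close> with \<open>\<epsilon>\<close> the top
  of \<open>Y\<close>, and the \<open>\<sigma>\<close>-class of \<open>(y, t)\<close> is \<open>{(z, t). z \<in> ran \<phi>\<^sub>t}\<close>, so the maximum of this class
  provided by the \<open>F\<close>-restriction property exhibits a greatest element \<open>r\<^sub>t\<close> of \<open>ran \<phi>\<^sub>t\<close>;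
  \<open>d\<^sub>t = r\<^sub>t \<circ> t\<close> is then the greatest element of \<open>dom \<phi>\<^sub>t\<close>.
  Each \<open>\<phi>\<^sub>t\<close> is an order isomorphism between order ideals, hence preserves meets, and since the
  action is partially defined, \<open>d\<^sub>s\<^sub>t = (d\<^sub>s \<and> r\<^sub>t) \<circ> t = d\<^sub>s \<bullet> t\<close>.
  From these the axioms of a double action follow by computing inside the isomorphisms \<open>\<phi>\<^sub>t\<close>,
  and the operations of \<open>M(T,Y)\<close> reduce to those of \<open>Y *\<^sub>m T\<close> because \<open>x \<circ> s \<le> d\<^sub>s\<close>.
\<close>

locale ABC_action =
  fixes act :: "'t::monoid_mult \<Rightarrow> 'y::semilattice_inf \<Rightarrow> 'y option"
  assumes left_partial: "left_partial_action act"
    and ABC: "axioms_ABC act"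
begin

lemma act_one: "act 1 y = Some y"
  using left_partial by (simp add: left_partial_action_def)

lemma act_mult_Some: "act t y = Some z \<Longrightarrow> act s z = Some w \<Longrightarrow> act (s * t) y = Some w"
  using left_partial unfolding left_partial_action_def by blast

lemma act_in_pdom: "act t x = Some z \<Longrightarrow> x \<in> pdom act t"
  by (simp add: pdom_def)

lemma act_in_pran: "act t x = Some z \<Longrightarrow> z \<in> pran act t"
  by (auto simp: pran_def)

lemma pdom_act_Some: "x \<in> pdom act t \<Longrightarrow> act t x = Some (the (act t x))"
  by (auto simp: pdom_def)

lemma pdom_nonempty: "pdom act t \<noteq> {}"
  using ABC by (simp add: axioms_ABC_def)

lemma pdom_down_closed: "x \<in> pdom act t \<Longrightarrow> y \<le> x \<Longrightarrow> y \<in> pdom act t"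
  using ABC unfolding axioms_ABC_def order_ideal_def by blast

lemma pran_down_closed: "x \<in> pran act t \<Longrightarrow> y \<le> x \<Longrightarrow> y \<in> pran act t"
  using ABC unfolding axioms_ABC_def order_ideal_def by blast

lemma act_le_iff:
  assumes "act t x = Some u" and "act t y = Some v"
  shows "x \<le> y \<longleftrightarrow> u \<le> v"
  using ABC assms unfolding axioms_ABC_def by (force simp: pdom_def)

lemma act_inj:
  assumes "act t x = Some u" and "act t y = Some u"
  shows "x = y"
  using act_le_iff[OF assms] act_le_iff[OF assms(2,1)] by (simp add: antisym)

lemma rcirc_eqI: "act t x = Some z \<Longrightarrow> rcirc act z t = x"
  unfolding rcirc_def by (rule the_equality) (auto intro: act_inj)

lemma act_rcirc: "z \<in> pran act t \<Longrightarrow> act t (rcirc act z t) = Some z"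
  by (auto simp: pran_def rcirc_eqI)

lemma rcirc_one: "rcirc act y 1 = y"
  by (rule rcirc_eqI[OF act_one])

lemma act_inf:
  assumes x: "act t x = Some u" and y: "act t y = Some v"
  shows "act t (inf x y) = Some (inf u v)"
proof -
  obtain w where w: "act t w = Some (inf u v)"
    using pran_down_closed[OF act_in_pran[OF x], of "inf u v"] by (auto simp: pran_def)
  obtain z where z: "act t (inf x y) = Some z"
    using pdom_down_closed[OF act_in_pdom[OF x], of "inf x y"] by (auto simp: pdom_def)
  have "z \<le> inf u v"
    using act_le_iff[OF z x] act_le_iff[OF z y] by simp
  moreover have "w \<le> inf x y"
    using act_le_iff[OF w x] act_le_iff[OF w y] by simp
  then have "inf u v \<le> z"
    using act_le_iff[OF w z] by simp
  ultimately show ?thesis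
    using z by (simp add: antisym)
qed

lemma M_unit_in_carrier: "(y, 1) \<in> M_carrier act"
  using act_in_pran[OF act_one] by (simp add: M_carrier_def)

lemma M_mult_unit_left: "M_mult act (e, 1) (y, t) = (inf e y, t)"
  by (simp add: M_mult_def rcirc_one act_one)

lemma M_projection: "(y, 1) \<in> projections (M_carrier act) (M_star act)"
  using M_unit_in_carrier[of y] unfolding projections_def
  by (force simp: M_star_def rcirc_one)

lemma M_monoid_imp_top:
  assumes "restriction_monoid (M_carrier act) (M_mult act) (M_star act) M_plus"
  shows "\<exists>e::'y. \<forall>y. y \<le> e"
proof -
  obtain u where unit: "\<forall>p\<in>M_carrier act. M_mult act u p = p"
    using assms unfolding restriction_monoid_def by blast
  obtain e t where u: "u = (e, t)"
    by (cases u)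
  have "M_mult act (e, t) (e, 1) = (e, 1)"
    using unit u M_unit_in_carrier by blast
  then have "t = 1"
    by (simp add: M_mult_def)
  have "inf e y = y" for y
  proof -
    have "M_mult act (e, 1) (y, 1) = (y, 1)"
      using unit u \<open>t = 1\<close> M_unit_in_carrier by blast
    then show ?thesis
      by (simp add: M_mult_unit_left)
  qed
  then show ?thesis
    by (metis inf.cobounded1)
qed

lemma sigma_rel_M_imp_same_snd:
  assumes "restriction_semigroup (M_carrier act) (M_mult act) (M_star act) M_plus"
    and "(p, q) \<in> sigma_rel (M_carrier act) (M_mult act) (M_star act) M_plus"
  shows "p \<in> M_carrier act \<and> q \<in> M_carrier act \<and> snd p = snd q"
proof -
  let ?S = "M_carrier act"
  let ?R = "{(p, q). p \<in> ?S \<and> q \<in> ?S \<and> snd p = snd q}"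
  have closed: "\<forall>x\<in>?S. \<forall>y\<in>?S. M_mult act x y \<in> ?S" "\<forall>x\<in>?S. M_star act x \<in> ?S \<and> M_plus x \<in> ?S"
    using assms(1) by (simp_all add: restriction_semigroup_def)
  have snd_ops: "snd (M_mult act x y) = snd x * snd y" "snd (M_star act x) = 1" "snd (M_plus x) = 1"
    for x y
    by (simp_all add: M_mult_def M_star_def M_plus_def split: prod.splits)
  have "equiv ?S ?R"
    by (rule equivI) (auto simp: refl_on_def sym_def trans_def)
  moreover have "\<forall>a b c. (a, b) \<in> ?R \<and> c \<in> ?S \<longrightarrow>
      (M_mult act c a, M_mult act c b) \<in> ?R \<and> (M_mult act a c, M_mult act b c) \<in> ?R"
    using closed(1) snd_ops(1) by auto
  moreover have "\<forall>a b. (a, b) \<in> ?R \<longrightarrow> (M_star act a, M_star act b) \<in> ?R \<and> (M_plus a, M_plus b) \<in> ?R"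
    using closed(2) snd_ops(2,3) by auto
  moreover have "projections ?S (M_star act) \<times> projections ?S (M_star act) \<subseteq> ?R"
    using closed(2) snd_ops(2) unfolding projections_def by auto
  ultimately have "sigma_rel ?S (M_mult act) (M_star act) M_plus \<subseteq> ?R"
    unfolding sigma_rel_def by blast
  then show ?thesis
    using assms(2) by blast
qed

lemma sigma_rel_M_same_snd:
  assumes "(y, t) \<in> M_carrier act" and "(z, t) \<in> M_carrier act"
  shows "((y, t), (z, t)) \<in> sigma_rel (M_carrier act) (M_mult act) (M_star act) M_plus"
  unfolding sigma_rel_def
proof (rule InterI, safe)
  fix R
  assume equiv: "equiv (M_carrier act) R"
    and cong: "\<forall>a b c. (a, b) \<in> R \<and> c \<in> M_carrier act \<longrightarrow>
      (M_mult act c a, M_mult act c b) \<in> R \<and> (M_mult act a c, M_mult act b c) \<in> R"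
    and proj: "projections (M_carrier act) (M_star act) \<times> projections (M_carrier act) (M_star act) \<subseteq> R"
  have to_meet: "((w, t), (inf y z, t)) \<in> R" if "(w, t) \<in> M_carrier act" "w = y \<or> w = z" for w
  proof -
    have "((w, 1), (inf y z, 1)) \<in> R"
      using proj M_projection by blast
    then have "(M_mult act (w, 1) (w, t), M_mult act (inf y z, 1) (w, t)) \<in> R"
      using cong that(1) by blast
    then show ?thesis
      using that(2) by (auto simp: M_mult_unit_left inf_aci)
  qed
  show "((y, t), (z, t)) \<in> R"
    using to_meet[OF assms(1)] to_meet[OF assms(2)] equiv by (meson equivE symE transE)
qed

lemma M_nat_le_imp_le:
  assumes "nat_le (M_carrier act) (M_mult act) (M_star act) (z, t) (m, t')"
  shows "z \<le> m"
proof -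
  obtain y s where "(z, t) = M_mult act (M_star act (y, s)) (m, t')"
    using assms unfolding nat_le_def projections_def by auto
  then show ?thesis
    by (simp add: M_star_def M_mult_unit_left)
qed

lemma M_F_restriction_imp_pran_greatest:
  assumes "restriction_semigroup (M_carrier act) (M_mult act) (M_star act) M_plus"
    and "F_restriction (M_carrier act) (M_mult act) (M_star act) M_plus"
  shows "\<exists>m\<in>pran act t. \<forall>z\<in>pran act t. z \<le> m"
proof -
  let ?\<sigma> = "sigma_rel (M_carrier act) (M_mult act) (M_star act) M_plus"
  obtain x where "x \<in> pdom act t"
    using pdom_nonempty by blast
  then have x: "(the (act t x), t) \<in> M_carrier act"
    using act_in_pran[OF pdom_act_Some] by (simp add: M_carrier_def)
  then obtain m t' where m: "((m, t'), (the (act t x), t)) \<in> ?\<sigma>"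
    "\<forall>c. (c, (the (act t x), t)) \<in> ?\<sigma> \<longrightarrow> nat_le (M_carrier act) (M_mult act) (M_star act) c (m, t')"
    using assms(2) unfolding F_restriction_def by fastforce
  have "m \<in> pran act t"
    using sigma_rel_M_imp_same_snd[OF assms(1) m(1)] by (auto simp: M_carrier_def)
  moreover have "z \<le> m" if "z \<in> pran act t" for z
  proof -
    have "((z, t), (the (act t x), t)) \<in> ?\<sigma>"
      using sigma_rel_M_same_snd[OF _ x] that by (simp add: M_carrier_def)
    then show ?thesis
      using m(2) M_nat_le_imp_le by blast
  qed
  ultimately show ?thesis
    by blast
qed

end

locale bounded_ABC_action = ABC_action act
  for act :: "'t::monoid_mult \<Rightarrow> 'y::semilattice_inf \<Rightarrow> 'y option" +
  assumes partially_defined: "partially_defined_action act"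
    and top_exists: "\<exists>e::'y. \<forall>y. y \<le> e"
    and pran_greatest: "\<exists>m\<in>pran act t. \<forall>z\<in>pran act t. z \<le> m"
begin

definition dmax :: "'t \<Rightarrow> 'y" where
  "dmax t = (GREATEST y. y \<in> pdom act t)"

definition rmax :: "'t \<Rightarrow> 'y" where
  "rmax t = (GREATEST y. y \<in> pran act t)"

definition star :: "'t \<Rightarrow> 'y \<Rightarrow> 'y" where
  "star t y = the (act t (inf y (dmax t)))"

definition bullet :: "'y \<Rightarrow> 't \<Rightarrow> 'y" where
  "bullet y t = rcirc act (inf y (rmax t)) t"

lemma le_sl_id: "(y::'y) \<le> sl_id"
proof -
  obtain e :: 'y where "\<forall>y. y \<le> e"
    using top_exists by blast
  then have "sl_id = e"
    unfolding sl_id_def by (simp add: Greatest_equality)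
  with \<open>\<forall>y. y \<le> e\<close> show ?thesis
    by blast
qed

lemma inf_sl_id [simp]: "inf (y::'y) sl_id = y" "inf sl_id (y::'y) = y"
  by (simp_all add: le_sl_id inf_absorb1 inf_absorb2)

lemma act_mult: "act (s * t) x = Option.bind (act t x) (act s)"
proof -
  have defined: "act (s * t) x \<noteq> None \<longleftrightarrow> (\<exists>y. act t x = Some y \<and> act s y \<noteq> None)"
    using partially_defined unfolding partially_defined_action_def by blast
  show ?thesis
  proof (cases "act t x")
    case (Some y)
    then show ?thesis
      using defined act_mult_Some[OF Some] by (cases "act s y") auto
  qed (use defined in simp)
qed

lemma pran_iff_le_rmax: "z \<in> pran act t \<longleftrightarrow> z \<le> rmax t"
proof -
  obtain m where m: "m \<in> pran act t" "\<forall>z\<in>pran act t. z \<le> m"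
    using pran_greatest by blast
  then have "rmax t = m"
    unfolding rmax_def by (simp add: Greatest_equality)
  then show ?thesis
    using m pran_down_closed by blast
qed

lemma act_dmax: "act t (dmax t) = Some (rmax t)"
proof -
  let ?x = "rcirc act (rmax t) t"
  have x: "act t ?x = Some (rmax t)"
    using act_rcirc pran_iff_le_rmax by blast
  have "y \<le> ?x" if "y \<in> pdom act t" for y
    using act_le_iff[OF pdom_act_Some[OF that] x] act_in_pran[OF pdom_act_Some[OF that]]
    by (simp add: pran_iff_le_rmax)
  then have "dmax t = ?x"
    unfolding dmax_def using act_in_pdom[OF x] by (simp add: Greatest_equality)
  then show ?thesis
    using x by simp
qed

lemma pdom_iff_le_dmax: "x \<in> pdom act t \<longleftrightarrow> x \<le> dmax t"
  using act_le_iff[OF _ act_dmax] act_in_pran pran_iff_le_rmax pdom_down_closed[OF act_in_pdom[OF act_dmax]]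
  by (auto simp: pdom_def)

lemma act_star: "act t (inf y (dmax t)) = Some (star t y)"
  unfolding star_def by (rule pdom_act_Some) (simp add: pdom_iff_le_dmax)

lemma act_star_le_dmax: "y \<le> dmax t \<Longrightarrow> act t y = Some (star t y)"
  using act_star[of t y] by (simp add: inf_absorb1)

lemma act_bullet: "act t (bullet y t) = Some (inf y (rmax t))"
  unfolding bullet_def by (rule act_rcirc) (simp add: pran_iff_le_rmax)

lemma star_le_rmax: "star t y \<le> rmax t"
  using act_in_pran[OF act_star] pran_iff_le_rmax by blast

lemma bullet_le_dmax: "bullet y t \<le> dmax t"
  using act_in_pdom[OF act_bullet] pdom_iff_le_dmax by blast

lemma bullet_eqI:
  assumes "w \<le> dmax t" and "star t w = inf y (rmax t)"
  shows "bullet y t = w"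
  using assms act_star_le_dmax[OF assms(1)] by (simp add: bullet_def rcirc_eqI)

lemma star_sl_id: "star t sl_id = rmax t"
  using act_star[of t sl_id] act_dmax by simp

lemma bullet_sl_id: "bullet sl_id t = dmax t"
  using rcirc_eqI[OF act_dmax] by (simp add: bullet_def)

lemma star_one: "star 1 y = y"
proof -
  have "y \<le> dmax 1"
    using act_in_pdom[OF act_one] pdom_iff_le_dmax by blast
  then show ?thesis
    using act_star_le_dmax[of y 1] act_one by simp
qed

lemma bullet_one: "bullet y 1 = y"
proof -
  have "y \<le> rmax 1"
    using act_in_pran[OF act_one] pran_iff_le_rmax by blast
  then show ?thesis
    by (simp add: bullet_def inf_absorb1 rcirc_one)
qed

lemma star_inf: "star t (inf x y) = inf (star t x) (star t y)"
proof -
  have "act t (inf (inf x (dmax t)) (inf y (dmax t))) = Some (inf (star t x) (star t y))"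
    using act_inf[OF act_star act_star] .
  moreover have "inf (inf x (dmax t)) (inf y (dmax t)) = inf (inf x y) (dmax t)"
    by (simp add: inf_aci)
  ultimately show ?thesis
    using act_star[of t "inf x y"] by simp
qed

lemma bullet_inf: "bullet (inf x y) t = inf (bullet x t) (bullet y t)"
proof -
  have "act t (inf (bullet x t) (bullet y t)) = Some (inf (inf x (rmax t)) (inf y (rmax t)))"
    using act_inf[OF act_bullet act_bullet] .
  moreover have "inf (inf x (rmax t)) (inf y (rmax t)) = inf (inf x y) (rmax t)"
    by (simp add: inf_aci)
  ultimately show ?thesis
    by (simp add: bullet_def rcirc_eqI)
qed

lemma bullet_mono: "x \<le> y \<Longrightarrow> bullet x t \<le> bullet y t"
  by (metis bullet_inf inf.absorb_iff2 inf.cobounded2)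

lemma bullet_star: "bullet (star t x) t = inf (bullet sl_id t) x"
proof -
  have "bullet (star t x) t = inf x (dmax t)"
    using rcirc_eqI[OF act_star] star_le_rmax by (simp add: bullet_def inf_absorb1)
  then show ?thesis
    by (simp add: bullet_sl_id inf_commute)
qed

lemma star_bullet: "star t (bullet x t) = inf x (star t sl_id)"
  using act_star_le_dmax[OF bullet_le_dmax] act_bullet by (simp add: star_sl_id)

lemma dmax_mult: "dmax (s * t) = bullet (dmax s) t"
proof (rule antisym)
  obtain u where u: "act t (dmax (s * t)) = Some u" "act s u \<noteq> None"
    using act_dmax[of "s * t"] by (auto simp: act_mult bind_eq_Some_conv)
  have "u \<le> inf (dmax s) (rmax t)"
    using u act_in_pran pran_iff_le_rmax pdom_iff_le_dmax by (auto simp: pdom_def)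
  then show "dmax (s * t) \<le> bullet (dmax s) t"
    using act_le_iff[OF u(1) act_bullet] by simp
next
  have "act s (inf (dmax s) (rmax t)) \<noteq> None"
    using act_star_le_dmax[of "inf (dmax s) (rmax t)" s] by simp
  then have "bullet (dmax s) t \<in> pdom act (s * t)"
    by (simp add: pdom_def act_mult act_bullet)
  then show "bullet (dmax s) t \<le> dmax (s * t)"
    by (simp add: pdom_iff_le_dmax)
qed

lemma star_mult: "star s (star t x) = star (s * t) x"
proof -
  let ?w = "inf x (dmax (s * t))"
  have "inf (inf x (dmax t)) (bullet (dmax s) t) = ?w"
    using bullet_le_dmax[of "dmax s" t] by (simp add: dmax_mult inf_aci inf_absorb2 le_infI2)
  moreover have "inf (star t x) (inf (dmax s) (rmax t)) = inf (star t x) (dmax s)"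
    using star_le_rmax[of t x] by (metis inf.absorb1 inf_assoc inf_commute)
  ultimately have "act t ?w = Some (inf (star t x) (dmax s))"
    using act_inf[OF act_star[of t x] act_bullet[of t "dmax s"]] by simp
  then have "act (s * t) ?w = Some (star s (star t x))"
    using act_star[of s "star t x"] by (simp add: act_mult)
  then show ?thesis
    using act_star[of "s * t" x] by simp
qed

lemma bullet_mult: "bullet (bullet x s) t = bullet x (s * t)"
proof (rule sym, rule bullet_eqI)
  show "bullet (bullet x s) t \<le> dmax (s * t)"
    unfolding dmax_mult by (rule bullet_mono[OF bullet_le_dmax])
  have "star s (rmax t) \<le> rmax s"
    by (rule star_le_rmax)
  then have "star (s * t) (bullet (bullet x s) t) = inf x (star s (rmax t))"
    by (simp add: star_mult[symmetric] star_bullet star_sl_id star_inf inf_aci inf_absorb2 le_infI2)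
  also have "star s (rmax t) = rmax (s * t)"
    by (simp add: star_sl_id[symmetric] star_mult)
  finally show "star (s * t) (bullet (bullet x s) t) = inf x (rmax (s * t))" .
qed

lemma double_action_star_bullet: "double_action star bullet"
  unfolding double_action_def
  by (simp add: star_one bullet_one star_mult bullet_mult star_inf bullet_inf bullet_star star_bullet)

lemma Ym_carrier_star: "Ym_carrier star = M_carrier act"
  by (auto simp: Ym_carrier_def M_carrier_def star_sl_id pran_iff_le_rmax)

lemma M_mult_eq_Ym_mult:
  assumes "p \<in> M_carrier act"
  shows "M_mult act p q = Ym_mult star p q"
proof -
  obtain x s y t where pq: "p = (x, s)" "q = (y, t)"
    by (cases p, cases q)
  have x: "act s (rcirc act x s) = Some x"
    using assms pq by (simp add: M_carrier_def act_rcirc)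
  then have "rcirc act x s \<le> dmax s"
    using act_in_pdom pdom_iff_le_dmax by blast
  then have "inf (rcirc act x s) (inf y (dmax s)) = inf (rcirc act x s) y"
    by (metis inf_absorb1 inf_assoc inf_commute)
  then have "act s (inf (rcirc act x s) y) = Some (inf x (star s y))"
    using act_inf[OF x act_star, of y] by simp
  then show ?thesis
    using pq by (simp add: M_mult_def Ym_mult_def)
qed

lemma M_star_eq_Ym_star:
  assumes "p \<in> M_carrier act"
  shows "M_star act p = Ym_star bullet p"
proof -
  obtain y t where p: "p = (y, t)"
    by (cases p)
  then have "y \<le> rmax t"
    using assms pran_iff_le_rmax by (simp add: M_carrier_def)
  then show ?thesis
    using p by (simp add: M_star_def Ym_star_def bullet_def inf_absorb1)
qed

lemma M_mult_unit:
  assumes "p \<in> M_carrier act"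
  shows "M_mult act Ym_one p = p" and "M_mult act p Ym_one = p"
proof -
  obtain x s where p: "p = (x, s)"
    by (cases p)
  then have "act s (rcirc act x s) = Some x"
    using assms by (simp add: M_carrier_def act_rcirc)
  then show "M_mult act p Ym_one = p"
    using p by (simp add: Ym_one_def M_mult_def)
  show "M_mult act Ym_one p = p"
    using p by (simp add: Ym_one_def M_mult_unit_left)
qed

end

theorem proposition3p13:
  fixes act :: "'t::monoid_mult \<Rightarrow> 'y::semilattice_inf \<Rightarrow> 'y option"
  assumes "left_partial_action act"
    and "axioms_ABC act"
    and "partially_defined_action act"
    and "ultra_F_restriction_monoid (M_carrier act) (M_mult act) (M_star act) M_plus"
  defines "d \<equiv> (\<lambda>t. GREATEST y. y \<in> pdom act t)"
    and "r \<equiv> (\<lambda>t. GREATEST y. y \<in> pran act t)"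
  defines "la \<equiv> (\<lambda>t y. the (act t (inf y (d t))))"
    and "ra \<equiv> (\<lambda>y t. rcirc act (inf y (r t)) t)"
  shows "double_action la ra
    \<and> Ym_carrier la = M_carrier act
    \<and> (\<forall>p\<in>M_carrier act. \<forall>q\<in>M_carrier act. M_mult act p q = Ym_mult la p q)
    \<and> (\<forall>p\<in>M_carrier act. M_star act p = Ym_star ra p)
    \<and> (\<forall>p\<in>M_carrier act. M_plus p = Ym_plus p)
    \<and> Ym_one \<in> M_carrier act
    \<and> (\<forall>p\<in>M_carrier act. M_mult act Ym_one p = p \<and> M_mult act p Ym_one = p)"
proof -
  interpret ABC_action act
    using assms(1,2) by unfold_locales
  have M: "restriction_monoid (M_carrier act) (M_mult act) (M_star act) M_plus"
    "F_restriction (M_carrier act) (M_mult act) (M_star act) M_plus"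
    using assms(4) unfolding ultra_F_restriction_monoid_def by blast+
  interpret bounded_ABC_action act
    using assms(3) M_monoid_imp_top[OF M(1)]
      M_F_restriction_imp_pran_greatest[OF _ M(2)] M(1)[unfolded restriction_monoid_def]
    by unfold_locales blast+
  have operations_eq: "la = star" "ra = bullet"
    by (simp_all add: fun_eq_iff la_def ra_def d_def r_def star_def bullet_def dmax_def rmax_def)
  have "M_plus p = Ym_plus p" for p :: "'y \<times> 't"
    by (simp add: M_plus_def Ym_plus_def)
  moreover have "Ym_one \<in> M_carrier act"
    by (simp add: Ym_one_def M_unit_in_carrier)
  ultimately show ?thesis
    unfolding operations_eq
    by (intro conjI ballI double_action_star_bullet Ym_carrier_star M_mult_eq_Ym_mult
        M_star_eq_Ym_star M_mult_unit)
qed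

end
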